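(* Let $C$ be a finite set of conditional constructor set constraints. Then $C$ is unsatisfiable (has no solution) if and only if its saturation $\mathrm{Sat}(C)$ is trivially unsatisfiable, i.e. $\mathrm{Sat}(C)$ contains the constraint $\emptyset \mathbin{?} k \in \emptyset$ for some constructor $k$.
   Context: Fix a finite set $\underline{D}$ of datatype identifiers. Each $d \in \underline{D}$ has a finite set $\mathrm{Con}(d)$ of constructors. There is a countable supply of refinement variables $X, Y, Z, \dots$. An assignment $\theta$ maps each refinement variable $X$ to a function that sends each $d \in \underline{D}$ to a subset $\theta(X)(d) \subseteq \mathrm{Con}(d)$. A constructor set expression over $d$ is either a finite set $\{k_1,\dots,k_m\} \subseteq \mathrm{Con}(d)$ or a pair $X(d)$. Its meaning is $\theta[\![X(d)]\!] = \theta(X)(d)$ and $\theta[\![\{k_1,\dots,k_m\}]\!] = \{k_1,\dots,k_m\}$. An inclusion constraint $S_1 \subseteq S_2$ relates two expressions over the same $d$, and $k \in S$ abbreviates $\{k\} \subseteq S$. A (conditional) constraint $\phi \mathbin{?} S_1 \subseteq S_2$ consists of a finite set $\phi$ (the guard) of inclusions of the form $k \in X(d)$ together with an inclusion $S_1 \subseteq S_2$ (the body). $\theta$ satisfies $\phi \mathbin{?} S_1 \subseteq S_2$ if the following holds: whenever $k \in \theta(X)(d)$ for every $k \in X(d)$ in $\phi$, then $\theta[\![S_1]\!] \subseteq \theta[\![S_2]\!]$. A solution of a set $C$ is an assignment satisfying every constraint of $C$, and $C$ is satisfiable if it has a solution. A constraint is atomic if its body has one of the forms $X(d) \subseteq Y(d)$,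 $X(d) \subseteq \{k_1,\dots,k_m\}$, $k \in X(d)$, or $k \in \emptyset$. An atomic constraint is trivially unsatisfiable if it is $\emptyset \mathbin{?} k \in \emptyset$, and a set is trivially unsatisfiable if it contains such a constraint. Every constraint is converted to an equivalent finite set of atomic constraints with the same guard, as follows. A body $\{k_1,\dots,k_m\} \subseteq S$ is split into the bodies $k_i \in S$. A body $k \in \{k_1,\dots,k_m\}$ is dropped if $k$ is one of the $k_i$, and otherwise becomes $k \in \emptyset$. The saturation rules, with conclusions converted to atomic form, are: - (Transitivity) from $\phi \mathbin{?} S_1 \subseteq S_2$ and $\psi \mathbin{?} S_2 \subseteq S_3$, derive $\phi \cup \psi \mathbin{?} S_1 \subseteq S_3$; - (Satisfaction) from $\phi \mathbin{?} k \in X(d)$ and $\psi \cup \{k \in X(d)\} \mathbin{?} S_1 \subseteq S_2$, derive $\phi \cup \psi \mathbin{?} S_1 \subseteq S_2$; - (Weakening) from $\phi \mathbin{?} X(d) \subseteq Y(d)$ and $\psi \cup \{k \in Y(d)\} \mathbin{?} S_1 \subseteq S_2$, derive $\phi \cup \psi \cup \{k \in X(d)\} \mathbin{?} S_1 \subseteq S_2$. $\mathrm{Sat}(C)$ is the atomic constraint set obtained from (the atomic form of) $C$ by iteratively applying these rules until closure. *)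

theory Defs
  imports Main
begin

text \<open>Constructor set expressions over a datatype d: either a refinement variable
  applied to d, written X(d), or a finite set of constructors.\<close>
datatype ('v, 'd, 'k) cexp = EVar 'v 'd | ELit "'k set"

text \<open>A guard literal k \<in> X(d) is represented as the triple (k, X, d).\<close>
type_synonym ('v, 'd, 'k) guard = "('k \<times> 'v \<times> 'd) set"

datatype ('v, 'd, 'k) incl = Incl 'd "('v, 'd, 'k) cexp" "('v, 'd, 'k) cexp"

type_synonym ('v, 'd, 'k) constr = "('v, 'd, 'k) guard \<times> ('v, 'd, 'k) incl"

definition is_assignment :: "('d \<Rightarrow> 'k set) \<Rightarrow> ('v \<Rightarrow> 'd \<Rightarrow> 'k set) \<Rightarrow> bool" where
  "is_assignment Con \<theta> \<longleftrightarrow> (\<forall>X d. \<theta> X d \<subseteq> Con d)"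

fun sem :: "('v \<Rightarrow> 'd \<Rightarrow> 'k set) \<Rightarrow> ('v, 'd, 'k) cexp \<Rightarrow> 'k set" where
  "sem \<theta> (EVar X d) = \<theta> X d"
| "sem \<theta> (ELit A) = A"

fun satisfies :: "('v \<Rightarrow> 'd \<Rightarrow> 'k set) \<Rightarrow> ('v, 'd, 'k) constr \<Rightarrow> bool" where
  "satisfies \<theta> (\<phi>, Incl d S1 S2) =
     ((\<forall>(k, X, d') \<in> \<phi>. k \<in> \<theta> X d') \<longrightarrow> sem \<theta> S1 \<subseteq> sem \<theta> S2)"

definition satisfiable :: "('d \<Rightarrow> 'k set) \<Rightarrow> ('v, 'd, 'k) constr set \<Rightarrow> bool" where
  "satisfiable Con C \<longleftrightarrow> (\<exists>\<theta>. is_assignment Con \<theta> \<and> (\<forall>c \<in> C. satisfies \<theta> c))"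

fun wf_exp :: "('d \<Rightarrow> 'k set) \<Rightarrow> 'd \<Rightarrow> ('v, 'd, 'k) cexp \<Rightarrow> bool" where
  "wf_exp Con d (EVar X d') = (d' = d)"
| "wf_exp Con d (ELit A) = (finite A \<and> A \<subseteq> Con d)"

fun wf_constr :: "('d \<Rightarrow> 'k set) \<Rightarrow> ('v, 'd, 'k) constr \<Rightarrow> bool" where
  "wf_constr Con (\<phi>, Incl d S1 S2) =
     (finite \<phi> \<and> (\<forall>(k, X, d') \<in> \<phi>. k \<in> Con d') \<and> wf_exp Con d S1 \<and> wf_exp Con d S2)"

fun atomize :: "('v, 'd, 'k) constr \<Rightarrow> ('v, 'd, 'k) constr set" where
  "atomize (\<phi>, Incl d (EVar X d') S) = {(\<phi>, Incl d (EVar X d') S)}"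
| "atomize (\<phi>, Incl d (ELit A) S) =
     (\<Union>k \<in> A. case S of
        EVar Y d' \<Rightarrow> {(\<phi>, Incl d (ELit {k}) (EVar Y d'))}
      | ELit B \<Rightarrow> (if k \<in> B then {} else {(\<phi>, Incl d (ELit {k}) (ELit {}))}))"

inductive_set Sat :: "('v, 'd, 'k) constr set \<Rightarrow> ('v, 'd, 'k) constr set"
  for C :: "('v, 'd, 'k) constr set" where
  base: "c \<in> C \<Longrightarrow> a \<in> atomize c \<Longrightarrow> a \<in> Sat C"
| trans: "(\<phi>, Incl d S1 S2) \<in> Sat C \<Longrightarrow> (\<psi>, Incl d S2 S3) \<in> Sat C \<Longrightarrow>
          a \<in> atomize (\<phi> \<union> \<psi>, Incl d S1 S3) \<Longrightarrow> a \<in> Sat C"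
| satisf: "(\<phi>, Incl d (ELit {k}) (EVar X d)) \<in> Sat C \<Longrightarrow>
          (insert (k, X, d) \<psi>, b) \<in> Sat C \<Longrightarrow>
          a \<in> atomize (\<phi> \<union> \<psi>, b) \<Longrightarrow> a \<in> Sat C"
| weaken: "(\<phi>, Incl d (EVar X d) (EVar Y d)) \<in> Sat C \<Longrightarrow>
          (insert (k, Y, d) \<psi>, b) \<in> Sat C \<Longrightarrow>
          a \<in> atomize (\<phi> \<union> \<psi> \<union> {(k, X, d)}, b) \<Longrightarrow> a \<in> Sat C"

definition trivially_unsat :: "('v, 'd, 'k) constr set \<Rightarrow> bool" where
  "trivially_unsat S \<longleftrightarrow> (\<exists>d k. ({}, Incl d (ELit {k}) (ELit {})) \<in> S)"

end

theory Submission
  imports Defs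
begin

text \<open>Soundness: atomization preserves meaning and each saturation rule is sound, so a solution
  of C satisfies all of Sat(C), and no assignment satisfies \<open>\<emptyset> ? k \<in> \<emptyset>\<close>.

  Completeness: if Sat(C) is not trivially unsatisfiable, put k into \<open>\<theta>(X)(d)\<close> exactly when the
  unguarded fact \<open>\<emptyset> ? k \<in> X(d)\<close> lies in Sat(C). An unguarded constraint \<open>X(d) \<subseteq> S\<close> of Sat(C)
  holds under \<open>\<theta>\<close>, since by Transitivity each \<open>k \<in> \<theta>(X)(d)\<close> yields the atomic form of
  \<open>\<emptyset> ? k \<in> S\<close> in Sat(C), which is not \<open>k \<in> \<emptyset>\<close>. If the guard of a guarded constraint holds
  under \<open>\<theta>\<close>, every guard literal is such an unguarded fact, and Satisfaction discharges them one
  by one. As the atomic form of C lies in Sat(C), \<open>\<theta>\<close> solves C. Weakening is only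
  needed to be sound.\<close>

fun atomic_body :: "('v, 'd, 'k) incl \<Rightarrow> bool" where
  "atomic_body (Incl d (EVar X d') S) = True"
| "atomic_body (Incl d (ELit A) (EVar Y d')) = (\<exists>k. A = {k})"
| "atomic_body (Incl d (ELit A) (ELit B)) = (\<exists>k. A = {k} \<and> B = {})"

lemma atomic_body_atomize:
  assumes "a \<in> atomize c" shows "atomic_body (snd a)"
proof (cases c rule: atomize.cases)
  case (2 \<phi> d A S)
  with assms show ?thesis by (cases S) (auto split: if_splits)
qed (use assms in simp)

lemma atomize_atomic: "atomic_body b \<Longrightarrow> atomize (\<phi>, b) = {(\<phi>, b)}"
  by (cases b rule: atomic_body.cases) auto

lemma satisfies_atomize_iff: "satisfies \<theta> c \<longleftrightarrow> (\<forall>a \<in> atomize c. satisfies \<theta> a)"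
proof (cases c rule: atomize.cases)
  case (2 \<phi> d A S)
  then show ?thesis by (cases S) (fastforce split: if_splits)+
qed simp

lemma satisfies_atomize: "satisfies \<theta> c \<Longrightarrow> a \<in> atomize c \<Longrightarrow> satisfies \<theta> a"
  using satisfies_atomize_iff by blast

lemma Sat_atomic_body: "a \<in> Sat C \<Longrightarrow> atomic_body (snd a)"
  by (induction rule: Sat.induct) (fast dest: atomic_body_atomize)+

lemma wf_constr_guard:
  "wf_constr Con (\<phi>, b) \<Longrightarrow> finite \<phi> \<and> (\<forall>(k, X, d) \<in> \<phi>. k \<in> Con d)"
  by (cases b) auto

lemma wf_constr_change_guard:
  "wf_constr Con (\<phi>, b) \<Longrightarrow> finite \<psi> \<Longrightarrow> \<forall>(k, X, d) \<in> \<psi>. k \<in> Con d \<Longrightarrow> wf_constr Con (\<psi>, b)"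
  by (cases b) auto

lemma wf_constr_atomize:
  assumes "wf_constr Con c" "a \<in> atomize c" shows "wf_constr Con a"
proof (cases c rule: atomize.cases)
  case (2 \<phi> d A S)
  with assms show ?thesis by (cases S) (auto split: if_splits)
qed (use assms in simp)

lemma Sat_wf:
  assumes "\<forall>c \<in> C. wf_constr Con c" "a \<in> Sat C" shows "wf_constr Con a"
  using assms(2)
proof induction
  case (base c a)
  then show ?case using assms(1) wf_constr_atomize by blast
next
  case (trans \<phi> d S1 S2 \<psi> S3 a)
  then have "wf_constr Con (\<phi> \<union> \<psi>, Incl d S1 S3)" by auto
  with trans.hyps show ?case by (blast intro: wf_constr_atomize)
next
  case (satisf \<phi> d k X \<psi> b a)
  then have "wf_constr Con (\<phi> \<union> \<psi>, b)"
    by (intro wf_constr_change_guard[OF satisf.IH(2)]) (auto dest!: wf_constr_guard)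
  with satisf.hyps show ?case by (blast intro: wf_constr_atomize)
next
  case (weaken \<phi> d X Y k \<psi> b a)
  then have "wf_constr Con (\<phi> \<union> \<psi> \<union> {(k, X, d)}, b)"
    by (intro wf_constr_change_guard[OF weaken.IH(2)]) (auto dest!: wf_constr_guard)
  with weaken.hyps show ?case by (blast intro: wf_constr_atomize)
qed

lemma satisfies_trans:
  "satisfies \<theta> (\<phi>, Incl d S1 S2) \<Longrightarrow> satisfies \<theta> (\<psi>, Incl d S2 S3) \<Longrightarrow>
   satisfies \<theta> (\<phi> \<union> \<psi>, Incl d S1 S3)"
  by (simp add: ball_Un) (meson subset_trans)

lemma satisfies_discharge:
  "satisfies \<theta> (\<phi>, Incl d (ELit {k}) (EVar X d)) \<Longrightarrow> satisfies \<theta> (insert (k, X, d) \<psi>, b) \<Longrightarrow>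
   satisfies \<theta> (\<phi> \<union> \<psi>, b)"
  by (cases b) (simp add: ball_Un)

lemma satisfies_weaken:
  "satisfies \<theta> (\<phi>, Incl d (EVar X d) (EVar Y d)) \<Longrightarrow> satisfies \<theta> (insert (k, Y, d) \<psi>, b) \<Longrightarrow>
   satisfies \<theta> (\<phi> \<union> \<psi> \<union> {(k, X, d)}, b)"
  by (cases b) (auto simp: ball_Un)

lemma Sat_sound:
  assumes "\<forall>c \<in> C. satisfies \<theta> c" "a \<in> Sat C" shows "satisfies \<theta> a"
  using assms(2)
proof induction
  case (base c a)
  then show ?case using assms(1) satisfies_atomize by blast
next
  case (trans \<phi> d S1 S2 \<psi> S3 a)
  from satisfies_trans[OF trans.IH] trans.hyps(3) show ?case by (rule satisfies_atomize)
next
  case (satisf \<phi> d k X \<psi> b a)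
  from satisfies_discharge[OF satisf.IH] satisf.hyps(3) show ?case by (rule satisfies_atomize)
next
  case (weaken \<phi> d X Y k \<psi> b a)
  from satisfies_weaken[OF weaken.IH] weaken.hyps(3) show ?case by (rule satisfies_atomize)
qed

lemma not_satisfiable_if_trivially_unsat:
  assumes "trivially_unsat (Sat C)" shows "\<not> satisfiable Con C"
proof
  assume "satisfiable Con C"
  then obtain \<theta> where "\<forall>c \<in> C. satisfies \<theta> c" unfolding satisfiable_def by blast
  moreover obtain d k where "({}, Incl d (ELit {k}) (ELit {})) \<in> Sat C"
    using assms unfolding trivially_unsat_def by blast
  ultimately show False using Sat_sound by fastforce
qed

definition canonical_assignment ::
    "('d \<Rightarrow> 'k set) \<Rightarrow> ('v, 'd, 'k) constr set \<Rightarrow> 'v \<Rightarrow> 'd \<Rightarrow> 'k set" where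
  "canonical_assignment Con S X d = {k \<in> Con d. ({}, Incl d (ELit {k}) (EVar X d)) \<in> S}"

lemma is_assignment_canonical: "is_assignment Con (canonical_assignment Con S)"
  unfolding is_assignment_def canonical_assignment_def by auto

lemma Sat_discharge_guard:
  assumes "finite F" "\<forall>(k, X, d) \<in> F. ({}, Incl d (ELit {k}) (EVar X d)) \<in> Sat C"
    and "(F \<union> G, b) \<in> Sat C"
  shows "(G, b) \<in> Sat C"
  using assms
proof (induction F arbitrary: G rule: finite_induct)
  case (insert x F)
  obtain k X d where x: "x = (k, X, d)" by (cases x)
  have unguarded: "({}, Incl d (ELit {k}) (EVar X d)) \<in> Sat C" using insert.prems x by auto
  have guarded: "(insert (k, X, d) (F \<union> G), b) \<in> Sat C" using insert.prems x by simp
  have "atomize ({} \<union> (F \<union> G), b) = {(F \<union> G, b)}"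
    using atomize_atomic Sat_atomic_body[OF guarded] by simp
  then have "(F \<union> G, b) \<in> Sat C" using Sat.satisf[OF unguarded guarded] by blast
  then show ?case using insert.IH insert.prems by blast
qed simp

lemma canonical_assignment_trans:
  assumes "k \<in> canonical_assignment Con (Sat C) X d" "({}, Incl d (EVar X d) T) \<in> Sat C"
  shows "atomize ({}, Incl d (ELit {k}) T) \<subseteq> Sat C"
  using assms unfolding canonical_assignment_def by (auto intro: Sat.trans)

lemma canonical_satisfies_unguarded:
  assumes "\<not> trivially_unsat (Sat C)" "wf_constr Con ({}, b)" and b: "({}, b) \<in> Sat C"
  shows "satisfies (canonical_assignment Con (Sat C)) ({}, b)"
proof (cases b rule: atomic_body.cases)
  case (1 d X d' S)
  let ?\<theta> = "canonical_assignment Con (Sat C)"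
  have var: "({}, Incl d (EVar X d) S) \<in> Sat C" using b 1 assms(2) by simp
  have "?\<theta> X d \<subseteq> sem ?\<theta> S"
  proof
    fix k assume k: "k \<in> ?\<theta> X d"
    have fact: "atomize ({}, Incl d (ELit {k}) S) \<subseteq> Sat C"
      using canonical_assignment_trans[OF k var] .
    show "k \<in> sem ?\<theta> S"
    proof (cases S)
      case (EVar Y d'')
      then have "d'' = d" using assms(2) 1 by simp
      then show ?thesis using fact k EVar by (simp add: canonical_assignment_def)
    next
      case (ELit B)
      then show ?thesis using fact assms(1) by (auto simp: trivially_unsat_def split: if_splits)
    qed
  qed
  then show ?thesis using 1 assms(2) by simp
next
  case (2 d A Y d')
  then obtain k where "A = {k}" using Sat_atomic_body[OF b] by auto
  with 2 show ?thesis using assms(2) b by (auto simp: canonical_assignment_def)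
next
  case (3 d A B)
  then obtain k where "b = Incl d (ELit {k}) (ELit {})" using Sat_atomic_body[OF b] by auto
  with b assms(1) show ?thesis unfolding trivially_unsat_def by blast
qed

lemma canonical_satisfies_Sat:
  assumes "\<not> trivially_unsat (Sat C)" "\<forall>c \<in> C. wf_constr Con c" "a \<in> Sat C"
  shows "satisfies (canonical_assignment Con (Sat C)) a"
proof -
  let ?\<theta> = "canonical_assignment Con (Sat C)"
  obtain \<phi> d S1 S2 where a: "a = (\<phi>, Incl d S1 S2)" by (metis incl.exhaust prod.exhaust)
  have wf: "wf_constr Con a" using Sat_wf assms(2,3) by blast
  have "sem ?\<theta> S1 \<subseteq> sem ?\<theta> S2" if guard: "\<forall>(k, X, d) \<in> \<phi>. k \<in> ?\<theta> X d"
  proof -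
    have "\<forall>(k, X, d) \<in> \<phi>. ({}, Incl d (ELit {k}) (EVar X d)) \<in> Sat C"
      using guard by (auto simp: canonical_assignment_def)
    then have "({}, Incl d S1 S2) \<in> Sat C"
      using Sat_discharge_guard[of \<phi> C "{}"] wf_constr_guard assms(3) wf a by simp
    moreover have "wf_constr Con ({}, Incl d S1 S2)" using wf a by simp
    ultimately have "satisfies ?\<theta> ({}, Incl d S1 S2)"
      using canonical_satisfies_unguarded[OF assms(1)] by blast
    then show ?thesis by simp
  qed
  then show ?thesis using a by simp
qed

lemma satisfiable_if_not_trivially_unsat:
  assumes "\<not> trivially_unsat (Sat C)" "\<forall>c \<in> C. wf_constr Con c"
  shows "satisfiable Con C"
  unfolding satisfiable_def
proof (intro exI conjI ballI)
  show "is_assignment Con (canonical_assignment Con (Sat C))"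
    by (rule is_assignment_canonical)
  fix c assume "c \<in> C"
  then have "\<forall>a \<in> atomize c. satisfies (canonical_assignment Con (Sat C)) a"
    using canonical_satisfies_Sat[OF assms] Sat.base by blast
  then show "satisfies (canonical_assignment Con (Sat C)) c"
    by (rule satisfies_atomize_iff[THEN iffD2])
qed

theorem theorem8p4:
  fixes Con :: "'d::finite \<Rightarrow> 'k set"
    and C :: "('v, 'd, 'k) constr set"
  assumes "\<And>d. finite (Con d)"
    and "finite C"
    and "\<forall>c \<in> C. wf_constr Con c"
  shows "\<not> satisfiable Con C \<longleftrightarrow> trivially_unsat (Sat C)"
  \<comment> \<open>The finiteness hypotheses only make Sat(C) finite, hence the criterion decidable;
    the equivalence does not need them.\<close>
  using not_satisfiable_if_trivially_unsat satisfiable_if_not_trivially_unsat[OF _ assms(3)]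
  by blast

end
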